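(* Let $\bar A=\{z\in\mathbb{C}:\operatorname{Re}z\ge0\}$. Let $Q_0$ be a function holomorphic in $\bar A$ and $Q_1$ a polynomial in one complex variable. If $Q_0(w)+vQ_1(w)\ne0$ for all $v,w\in\bar A$, then $Q_0(z)+Q_1'(z)\ne0$ for all $z\in\bar A$. *)

theory Defs
  imports "HOL-Complex_Analysis.Complex_Analysis" "HOL-Computational_Algebra.Polynomial"
begin

end

theory Submission
  imports Defs "HOL-Computational_Algebra.Fundamental_Theorem_Algebra"
begin

(* For Q0 w \<noteq> 0 and v \<noteq> 0, the equation Q0 w + v Q1 w = 0 says Q1 w / Q0 w = -1/v, so the
   hypothesis keeps Q1/Q0 away from the punctured closed left half-plane. By the open mapping
   theorem every root of Q1 then has Re \<le> 0, hence the logarithmic derivative Q1'/Q1 has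
   nonnegative real part on the closed right half-plane, and v = Q1' z / Q1 z would solve
   Q0 z + v Q1 z = 0 if Q0 z + Q1' z = 0. At a root z of Q1 with Q0 z + Q1' z = 0 one has
   Q1 (z + t) / Q0 (z + t) \<approx> -t for small real t > 0, again a forbidden value. *)

lemma Re_pderiv_div_poly_nonneg:
  fixes p :: "complex poly"
  assumes "\<And>r. poly p r = 0 \<Longrightarrow> Re r \<le> 0" and "Re z \<ge> 0" and "poly p z \<noteq> 0"
  shows "Re (poly (pderiv p) z / poly p z) \<ge> 0"
  using assms
proof (induction "degree p" arbitrary: p rule: less_induct)
  case less
  show ?case
  proof (cases "degree p = 0")
    case True
    then have "pderiv p = 0"
      using pderiv_eq_0_iff by blast
    then show ?thesis by simp
  next
    case False
    then obtain r where r: "poly p r = 0"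
      using fundamental_theorem_of_algebra constant_degree by metis
    then obtain q where p: "p = [:-r, 1:] * q"
      by (metis dvdE poly_eq_0_iff_dvd)
    have "q \<noteq> 0" and "z - r \<noteq> 0" and qz: "poly q z \<noteq> 0"
      using less.prems(3) p by auto
    then have "degree q < degree p"
      unfolding p by (subst degree_mult_eq) auto
    moreover have "\<And>s. poly q s = 0 \<Longrightarrow> Re s \<le> 0"
      using less.prems(1) p by auto
    ultimately have IH: "Re (poly (pderiv q) z / poly q z) \<ge> 0"
      using less.hyps less.prems(2) qz by blast
    have "poly (pderiv p) z / poly p z = poly (pderiv q) z / poly q z + 1 / (z - r)"
      using qz \<open>z - r \<noteq> 0\<close> unfolding p pderiv_mult
      by (simp add: pderiv_pCons field_simps)
    moreover have "Re (1 / (z - r)) \<ge> 0"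
      using less.prems(1)[OF r] less.prems(2) by (simp add: Re_divide)
    ultimately show ?thesis
      using IH by simp
  qed
qed

lemma holomorphic_zero_attains_negative_real:
  assumes "f holomorphic_on S" "open S" "connected S" "\<not> f constant_on S"
    and "r \<in> S" "f r = 0"
  obtains e w where "e > 0" "w \<in> S" "f w = - of_real e"
proof -
  have "open (f ` S)" and "0 \<in> f ` S"
    using open_mapping_thm[OF assms(1-3,2) subset_refl assms(4)] assms(5,6) by auto
  then obtain e where "e > 0" "ball 0 e \<subseteq> f ` S"
    using open_contains_ball by blast
  moreover have "- of_real (e/2) \<in> ball (0::complex) e"
    using \<open>e > 0\<close> by simp
  ultimately obtain w where "w \<in> S" "f w = - of_real (e/2)"
    by (metis image_iff subsetD)
  with \<open>e > 0\<close> show thesis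
    using that[of "e/2"] by simp
qed

lemma poly_root_Re_nonpos:
  fixes Q0 :: "complex \<Rightarrow> complex" and Q1 :: "complex poly"
  assumes "Q0 holomorphic_on {z. Re z > 0}" and "Q1 \<noteq> 0"
    and "\<And>v w. Re v \<ge> 0 \<Longrightarrow> Re w > 0 \<Longrightarrow> Q0 w + v * poly Q1 w \<noteq> 0"
    and "poly Q1 r = 0"
  shows "Re r \<le> 0"
proof (rule ccontr)
  assume "\<not> Re r \<le> 0"
  define S where "S = {z. Re z > 0}"
  have Q0_nz: "Q0 w \<noteq> 0" if "w \<in> S" for w
    using assms(3)[of 0 w] that by (simp add: S_def)
  define \<phi> where "\<phi> = (\<lambda>w. poly Q1 w / Q0 w)"
  have "\<phi> holomorphic_on S"
    unfolding \<phi>_def using assms(1) Q0_nz by (intro holomorphic_intros) (simp_all add: S_def)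
  moreover have "\<not> \<phi> constant_on S"
  proof
    assume "\<phi> constant_on S"
    then obtain c where "\<And>w. w \<in> S \<Longrightarrow> \<phi> w = c"
      by (auto simp: constant_on_def)
    with \<open>\<not> Re r \<le> 0\<close> assms(4) have "\<forall>w\<in>S. \<phi> w = 0"
      by (metis S_def \<phi>_def div_0 linorder_not_le mem_Collect_eq)
    then have "S \<subseteq> {x. poly Q1 x = 0}"
      using Q0_nz by (auto simp: \<phi>_def)
    moreover have "infinite S"
      using uncountable_halfspace_Re_gt[of 0] countable_finite by (auto simp: S_def)
    ultimately show False
      using poly_roots_finite[OF assms(2)] finite_subset by blast
  qed
  moreover have "r \<in> S" "\<phi> r = 0"
    using \<open>\<not> Re r \<le> 0\<close> assms(4) by (auto simp: S_def \<phi>_def)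
  ultimately obtain e w where "e > 0" "w \<in> S" "\<phi> w = - of_real e"
    using holomorphic_zero_attains_negative_real[of \<phi> S r] open_halfspace_Re_gt
    unfolding S_def by blast
  then have "Q0 w + of_real (1/e) * poly Q1 w = 0"
    using Q0_nz[of w] by (simp add: \<phi>_def field_simps)
  with \<open>e > 0\<close> \<open>w \<in> S\<close> assms(3)[of "of_real (1/e)" w] show False
    by (simp add: S_def)
qed

lemma solution_right_of_root:
  fixes Q0 :: "complex \<Rightarrow> complex" and Q1 :: "complex poly"
  assumes "isCont Q0 z" and "Q0 z \<noteq> 0" and "poly Q1 z = 0"
    and "Q0 z + poly (pderiv Q1) z = 0"
  obtains t v where "t > 0" "Re v > 0" "Q0 (z + of_real t) + v * poly Q1 (z + of_real t) = 0"
proof -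
  obtain q where Q1: "Q1 = [:-z, 1:] * q"
    using assms(3) by (metis dvdE poly_eq_0_iff_dvd)
  have "poly (pderiv Q1) z = poly q z"
    unfolding Q1 pderiv_mult by (simp add: pderiv_pCons)
  with assms(4) have "poly q z = - Q0 z"
    by (simp add: add_eq_0_iff)
  define g where "g = (\<lambda>t::real. - Q0 (z + of_real t) / poly q (z + of_real t))"
  have "((\<lambda>t::real. z + of_real t) \<longlongrightarrow> z) (at_right 0)"
    by (auto intro!: tendsto_eq_intros)
  then have "(g \<longlongrightarrow> - Q0 z / poly q z) (at_right 0)"
    unfolding g_def using assms(1,2) \<open>poly q z = - Q0 z\<close>
    by (intro tendsto_intros isCont_tendsto_compose[of _ Q0] isCont_tendsto_compose[of _ "poly q"])
      auto
  then have "((\<lambda>t. Re (g t)) \<longlongrightarrow> 1) (at_right 0)"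
    using \<open>poly q z = - Q0 z\<close> assms(2) tendsto_Re by fastforce
  then have "\<forall>\<^sub>F t in at_right 0. t > 0 \<and> Re (g t) > 0"
    using eventually_at_right_less order_tendstoD(1)[of _ 1 _ 0] eventually_conj by fastforce
  then obtain t where "t > 0" "Re (g t) > 0"
    using eventually_happens' trivial_limit_at_right_real by blast
  then have "poly q (z + of_real t) \<noteq> 0"
    by (auto simp: g_def)
  then have "g t / of_real t * poly Q1 (z + of_real t) = - Q0 (z + of_real t)"
    using \<open>t > 0\<close> by (simp add: g_def Q1 algebra_simps)
  with \<open>t > 0\<close> \<open>Re (g t) > 0\<close> show thesis
    using that[of t "g t / of_real t"] by (simp add: Re_divide_of_real)
qed

theorem lemma2p1:
  fixes Q0 :: "complex \<Rightarrow> complex" and Q1 :: "complex poly"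
  assumes "Q0 analytic_on {z. Re z \<ge> 0}"
    and "\<And>v w. Re v \<ge> 0 \<Longrightarrow> Re w \<ge> 0 \<Longrightarrow> Q0 w + v * poly Q1 w \<noteq> 0"
  shows "\<forall>z. Re z \<ge> 0 \<longrightarrow> Q0 z + poly (pderiv Q1) z \<noteq> 0"
proof (intro allI impI notI)
  fix z :: complex
  assume z: "Re z \<ge> 0" and eq: "Q0 z + poly (pderiv Q1) z = 0"
  have "Q0 z \<noteq> 0"
    using assms(2)[of 0 z] z by simp
  show False
  proof (cases "poly Q1 z = 0")
    case True
    have "isCont Q0 z"
      using assms(1) z analytic_at_imp_isCont analytic_on_subset by blast
    then obtain t v
      where "t > 0" "Re v > 0" "Q0 (z + of_real t) + v * poly Q1 (z + of_real t) = 0"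
      using solution_right_of_root \<open>Q0 z \<noteq> 0\<close> True eq by blast
    moreover have "Re (z + of_real t) \<ge> 0"
      using z \<open>t > 0\<close> by simp
    ultimately show False
      using assms(2) less_imp_le by blast
  next
    case False
    have "Q0 holomorphic_on {z. Re z > 0}"
      using assms(1) analytic_imp_holomorphic holomorphic_on_subset by fastforce
    then have "Re r \<le> 0" if "poly Q1 r = 0" for r
      using poly_root_Re_nonpos[of Q0 Q1 r] assms(2) that False by fastforce
    then have "Re (poly (pderiv Q1) z / poly Q1 z) \<ge> 0"
      using Re_pderiv_div_poly_nonneg z False by blast
    moreover have "Q0 z + poly (pderiv Q1) z / poly Q1 z * poly Q1 z = 0"
      using eq False by simp
    ultimately show False
      using assms(2) z by blast
  qed
qed

end
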